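(* Let $G$ be a group generated by a finite subset $T \subseteq G$, let $N \lhd G$ be a normal subgroup of finite index, and let $\overline{T}$ be the multiset $\{tN : t \in T\}$ in $G/N$. Then $d_G(N) \leq r(G/N, \overline{T})$.
   Context: For a group $G$ and subsets $S, X \subseteq G$, $\langle S \rangle^X$ denotes the subgroup generated by all conjugates $xsx^{-1}$ with $s \in S$, $x \in X$. For $N \lhd G$, $d_G(N)$ is the least cardinality of a subset $S \subseteq N$ with $\langle S \rangle^G = N$. For a finite group $K$ and a generating multiset $T = \{t_1, \dots, t_d\}$ of $K$, let $F$ be the free group on $x_1, \dots, x_d$ and $\varphi : F \to K$ the surjection with $\varphi(x_i) = t_i$; then $r(K,T) = d_F(\mathrm{Ker}(\varphi))$. *)

theory Defs
  imports "HOL-Algebra.Algebra" "HOL-Library.Extended_Nat"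
begin

definition normal_closure :: "('a, 'b) monoid_scheme \<Rightarrow> 'a set \<Rightarrow> 'a set" where
  "normal_closure G S =
     generate G {x \<otimes>\<^bsub>G\<^esub> s \<otimes>\<^bsub>G\<^esub> inv\<^bsub>G\<^esub> x | x s. x \<in> carrier G \<and> s \<in> S}"

text \<open>d_G(N): least cardinality of S subset N with normal closure N
  (infinity if no finite such S exists; infinite S never beat a finite one).\<close>
definition normal_rank :: "('a, 'b) monoid_scheme \<Rightarrow> 'a set \<Rightarrow> enat" where
  "normal_rank G N =
     Inf {enat (card S) | S. S \<subseteq> N \<and> finite S \<and> normal_closure G S = N}"

text \<open>Free group on the index set I: reduced words over letters (i, b), where
  (i, True) stands for x_i and (i, False) for x_i^-1.\<close>
definition reduced_word :: "('i \<times> bool) list \<Rightarrow> bool" where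
  "reduced_word ws \<longleftrightarrow>
     (\<forall>k. Suc k < length ws \<longrightarrow>
        \<not> (fst (ws ! k) = fst (ws ! Suc k) \<and> snd (ws ! k) \<noteq> snd (ws ! Suc k)))"

definition free_reduce :: "('i \<times> bool) list \<Rightarrow> ('i \<times> bool) list" where
  "free_reduce ws = foldr (\<lambda>a acc. case acc of [] \<Rightarrow> [a]
        | b # bs \<Rightarrow> (if fst a = fst b \<and> snd a \<noteq> snd b then bs else a # acc)) ws []"

definition free_grp :: "'i set \<Rightarrow> ('i \<times> bool) list monoid" where
  "free_grp I = \<lparr> carrier = {ws. set ws \<subseteq> I \<times> UNIV \<and> reduced_word ws},
                  monoid.mult = (\<lambda>xs ys. free_reduce (xs @ ys)),
                  monoid.one = [] \<rparr>"

definition free_lift :: "('k, 'c) monoid_scheme \<Rightarrow> ('i \<Rightarrow> 'k) \<Rightarrow> ('i \<times> bool) list \<Rightarrow> 'k" where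
  "free_lift K t ws =
     foldr (\<lambda>(i, b) acc. (if b then t i else inv\<^bsub>K\<^esub> (t i)) \<otimes>\<^bsub>K\<^esub> acc) ws \<one>\<^bsub>K\<^esub>"

text \<open>r(K, T) for the generating family (t i)_{i in I} of K, i.e. the multiset {t i | i in I}.\<close>
definition relation_rank :: "('k, 'c) monoid_scheme \<Rightarrow> 'i set \<Rightarrow> ('i \<Rightarrow> 'k) \<Rightarrow> enat" where
  "relation_rank K I t = normal_rank (free_grp I) (kernel (free_grp I) K (free_lift K t))"

end

theory Submission
  imports Defs
begin

text \<open>Let \<open>F\<close> be free on \<open>T\<close>, \<open>\<phi> : F \<rightarrow> G\<close> the surjection \<open>x\<^sub>t \<mapsto> t\<close> and
  \<open>\<psi> : F \<rightarrow> G/N\<close> the map \<open>x\<^sub>t \<mapsto> tN\<close>. Then \<open>\<psi>\<close> is \<open>\<phi>\<close> followed by the quotient map,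
  so \<open>ker \<psi> = \<phi>\<^sup>-\<^sup>1(N)\<close> and, \<open>\<phi>\<close> being onto, \<open>\<phi>(ker \<psi>) = N\<close>. A surjective homomorphism
  maps the normal closure of \<open>S\<close> onto the normal closure of \<open>\<phi>(S)\<close>, so the image of a
  normal generating set of \<open>ker \<psi>\<close> normally generates \<open>N\<close> and is no larger.\<close>

definition reduce_step :: "'i \<times> bool \<Rightarrow> ('i \<times> bool) list \<Rightarrow> ('i \<times> bool) list" where
  "reduce_step a acc = (case acc of [] \<Rightarrow> [a]
        | b # bs \<Rightarrow> (if fst a = fst b \<and> snd a \<noteq> snd b then bs else a # acc))"

lemma free_reduce_eq_foldr: "free_reduce ws = foldr reduce_step ws []"
  unfolding free_reduce_def reduce_step_def by (rule refl)

fun reduced :: "('i \<times> bool) list \<Rightarrow> bool" where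
  "reduced [] = True"
| "reduced [a] = True"
| "reduced (a # b # ws) = (\<not> (fst a = fst b \<and> snd a \<noteq> snd b) \<and> reduced (b # ws))"

lemma reduced_word_iff_reduced: "reduced_word ws \<longleftrightarrow> reduced ws"
proof (induction ws rule: reduced.induct)
  case (3 a b ws)
  have all_nat_split: "(\<forall>k. Q k) = (Q 0 \<and> (\<forall>k. Q (Suc k)))" for Q :: "nat \<Rightarrow> bool"
    by (metis not0_implies_Suc)
  have "reduced_word (a # b # ws) \<longleftrightarrow>
     \<not> (fst a = fst b \<and> snd a \<noteq> snd b) \<and> reduced_word (b # ws)"
    unfolding reduced_word_def by (subst all_nat_split) simp
  then show ?case using 3 by simp
qed (simp_all add: reduced_word_def)

lemma reduced_ConsD: "reduced (a # ws) \<Longrightarrow> reduced ws"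
  by (cases ws) auto

lemma reduced_reduce_step: "reduced r \<Longrightarrow> reduced (reduce_step a r)"
  by (cases r rule: reduced.cases) (auto simp: reduce_step_def)

lemma reduced_foldr_reduce_step: "reduced r \<Longrightarrow> reduced (foldr reduce_step ws r)"
  by (induction ws) (auto intro: reduced_reduce_step)

lemma reduced_free_reduce: "reduced (free_reduce ws)"
  unfolding free_reduce_eq_foldr by (rule reduced_foldr_reduce_step) simp

lemma free_reduce_reduced: "reduced w \<Longrightarrow> free_reduce w = w"
proof (induction w)
  case (Cons a w)
  then have "free_reduce w = w" using reduced_ConsD by blast
  then show ?case using Cons.prems
    by (cases w) (auto simp: free_reduce_eq_foldr reduce_step_def)
qed (simp add: free_reduce_eq_foldr)

lemma free_reduce_append: "free_reduce (xs @ ys) = foldr reduce_step xs (free_reduce ys)"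
  by (simp add: free_reduce_eq_foldr)

lemma set_free_reduce: "set (free_reduce ws) \<subseteq> set ws"
proof (induction ws)
  case (Cons a ws)
  have "set (reduce_step a r) \<subseteq> insert a (set r)" for r
    by (cases r) (auto simp: reduce_step_def)
  then show ?case using Cons by (force simp: free_reduce_eq_foldr)
qed (simp add: free_reduce_eq_foldr)

definition inverse_letter :: "'i \<times> bool \<Rightarrow> 'i \<times> bool" where
  "inverse_letter a = (fst a, \<not> snd a)"

lemma reduce_step_inverse_letter:
  "reduced r \<Longrightarrow> reduce_step (inverse_letter a) (reduce_step a r) = r"
  by (cases r rule: reduced.cases) (auto simp: reduce_step_def inverse_letter_def prod_eq_iff)

lemma foldr_reduce_step_reduce_step:
  assumes "reduced w" "reduced r"
  shows "foldr reduce_step (reduce_step a w) r = reduce_step a (foldr reduce_step w r)"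
proof (cases w)
  case (Cons b bs)
  show ?thesis
  proof (cases "fst a = fst b \<and> snd a \<noteq> snd b")
    case True
    then have "a = inverse_letter b" by (auto simp: inverse_letter_def prod_eq_iff)
    then have "reduce_step a (foldr reduce_step w r) = foldr reduce_step bs r"
      using Cons reduce_step_inverse_letter[OF reduced_foldr_reduce_step[OF assms(2)]] by simp
    moreover have "reduce_step a w = bs" using True Cons by (simp add: reduce_step_def)
    ultimately show ?thesis by simp
  next
    case False
    then have "reduce_step a w = a # w" using Cons by (simp add: reduce_step_def)
    then show ?thesis by simp
  qed
qed (simp add: reduce_step_def)

text \<open>Words act on reduced words through \<open>foldr reduce_step\<close>, and a word acts as its reduced
  form does; associativity of the free group follows.\<close>

lemma foldr_reduce_step_free_reduce:
  "reduced r \<Longrightarrow> foldr reduce_step (free_reduce ws) r = foldr reduce_step ws r"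
proof (induction ws)
  case (Cons a ws)
  have "free_reduce (a # ws) = reduce_step a (free_reduce ws)"
    by (simp add: free_reduce_eq_foldr)
  then show ?case
    using foldr_reduce_step_reduce_step[OF reduced_free_reduce Cons.prems] Cons by simp
qed (simp add: free_reduce_eq_foldr)

lemma free_reduce_assoc:
  "free_reduce (free_reduce (x @ y) @ z) = free_reduce (x @ free_reduce (y @ z))"
proof -
  have "free_reduce (free_reduce (x @ y) @ z) = foldr reduce_step (free_reduce (x @ y)) (free_reduce z)"
    by (rule free_reduce_append)
  also have "\<dots> = foldr reduce_step (x @ y) (free_reduce z)"
    by (rule foldr_reduce_step_free_reduce[OF reduced_free_reduce])
  also have "\<dots> = free_reduce (x @ free_reduce (y @ z))"
    using free_reduce_reduced[OF reduced_free_reduce, of "y @ z"]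
    by (simp only: free_reduce_append foldr_append o_apply)
  finally show ?thesis .
qed

lemma foldr_reduce_step_inverse_word:
  "reduced (w @ r) \<Longrightarrow> foldr reduce_step (rev (map inverse_letter w)) (w @ r) = r"
proof (induction w)
  case (Cons b bs)
  then have "reduced (bs @ r)" by (metis append_Cons reduced_ConsD)
  then show ?case
    using Cons by (simp add: reduce_step_def inverse_letter_def)
qed simp

lemma group_free_grp: "group (free_grp I)"
proof (rule groupI)
  fix x y assume "x \<in> carrier (free_grp I)" "y \<in> carrier (free_grp I)"
  then show "x \<otimes>\<^bsub>free_grp I\<^esub> y \<in> carrier (free_grp I)"
    using set_free_reduce[of "x @ y"] reduced_free_reduce[of "x @ y"]
    by (auto simp: free_grp_def reduced_word_iff_reduced)
next
  fix x assume x: "x \<in> carrier (free_grp I)"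
  then have "reduced x" by (simp add: free_grp_def reduced_word_iff_reduced)
  let ?y = "free_reduce (rev (map inverse_letter x))"
  have "?y \<in> carrier (free_grp I)"
    using x set_free_reduce[of "rev (map inverse_letter x)"] reduced_free_reduce
    by (fastforce simp: free_grp_def reduced_word_iff_reduced inverse_letter_def)
  moreover have "?y \<otimes>\<^bsub>free_grp I\<^esub> x = \<one>\<^bsub>free_grp I\<^esub>"
    using foldr_reduce_step_inverse_word[of x "[]"] \<open>reduced x\<close>
    by (simp add: free_grp_def free_reduce_append foldr_reduce_step_free_reduce
        free_reduce_reduced)
  ultimately show "\<exists>y\<in>carrier (free_grp I). y \<otimes>\<^bsub>free_grp I\<^esub> x = \<one>\<^bsub>free_grp I\<^esub>"
    by blast
qed (auto simp: free_grp_def reduced_word_iff_reduced free_reduce_assoc free_reduce_reduced)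

definition letter_value :: "('k, 'c) monoid_scheme \<Rightarrow> ('i \<Rightarrow> 'k) \<Rightarrow> 'i \<times> bool \<Rightarrow> 'k" where
  "letter_value K t a = (if snd a then t (fst a) else inv\<^bsub>K\<^esub> (t (fst a)))"

lemma free_lift_Nil: "free_lift K t [] = \<one>\<^bsub>K\<^esub>"
  by (simp add: free_lift_def)

lemma free_lift_Cons: "free_lift K t (a # w) = letter_value K t a \<otimes>\<^bsub>K\<^esub> free_lift K t w"
  by (cases a) (simp add: free_lift_def letter_value_def)

lemma letter_value_closed:
  "group K \<Longrightarrow> t ` I \<subseteq> carrier K \<Longrightarrow> a \<in> I \<times> UNIV \<Longrightarrow> letter_value K t a \<in> carrier K"
  by (auto simp: letter_value_def intro: group.inv_closed)

lemma free_lift_closed: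
  "group K \<Longrightarrow> t ` I \<subseteq> carrier K \<Longrightarrow> set w \<subseteq> I \<times> UNIV \<Longrightarrow> free_lift K t w \<in> carrier K"
  by (induction w)
    (auto simp: free_lift_Nil free_lift_Cons intro: letter_value_closed group.is_monoid monoid.m_closed)

lemma free_lift_append:
  assumes "group K" "t ` I \<subseteq> carrier K" "set xs \<subseteq> I \<times> UNIV" "set ys \<subseteq> I \<times> UNIV"
  shows "free_lift K t (xs @ ys) = free_lift K t xs \<otimes>\<^bsub>K\<^esub> free_lift K t ys"
  using assms(3)
proof (induction xs)
  interpret K: group K by (rule assms(1))
  case Nil
  then show ?case using free_lift_closed[OF assms(1,2,4)] by (simp add: free_lift_Nil)
next
  interpret K: group K by (rule assms(1))
  case (Cons a xs)
  then show ?case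
    using free_lift_closed[OF assms(1,2,4)] free_lift_closed[OF assms(1,2), of xs]
      letter_value_closed[OF assms(1,2), of a]
    by (simp add: free_lift_Cons K.m_assoc)
qed

lemma free_lift_reduce_step:
  assumes "group K" "t ` I \<subseteq> carrier K" "a \<in> I \<times> UNIV" "set r \<subseteq> I \<times> UNIV"
  shows "free_lift K t (reduce_step a r) = free_lift K t (a # r)"
proof (cases r)
  interpret K: group K by (rule assms(1))
  case (Cons b bs)
  show ?thesis
  proof (cases "fst a = fst b \<and> snd a \<noteq> snd b")
    case True
    have b: "b \<in> I \<times> UNIV" "set bs \<subseteq> I \<times> UNIV" using Cons assms(4) by auto
    then have "t (fst b) \<in> carrier K" using assms(2) by auto
    then have "letter_value K t a \<otimes>\<^bsub>K\<^esub> letter_value K t b = \<one>\<^bsub>K\<^esub>"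
      using True by (cases "snd b") (auto simp: letter_value_def)
    then have "free_lift K t (a # r) = free_lift K t bs"
      using Cons free_lift_closed[OF assms(1,2) b(2)] letter_value_closed[OF assms(1,2) assms(3)]
        letter_value_closed[OF assms(1,2) b(1)]
      by (simp add: free_lift_Cons K.m_assoc[symmetric])
    then show ?thesis using True Cons by (simp add: reduce_step_def)
  next
    case False
    then have "reduce_step a r = a # r" using Cons by (simp add: reduce_step_def)
    then show ?thesis by simp
  qed
qed (simp add: reduce_step_def)

lemma free_lift_free_reduce:
  assumes "group K" "t ` I \<subseteq> carrier K" "set w \<subseteq> I \<times> UNIV"
  shows "free_lift K t (free_reduce w) = free_lift K t w"
  using assms(3)
proof (induction w)
  case (Cons a w)
  have "free_reduce (a # w) = reduce_step a (free_reduce w)"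
    by (simp add: free_reduce_eq_foldr)
  moreover have "set (free_reduce w) \<subseteq> I \<times> UNIV" using set_free_reduce[of w] Cons by auto
  ultimately show ?case
    using free_lift_reduce_step[OF assms(1,2)] Cons by (simp add: free_lift_Cons)
qed (simp add: free_reduce_eq_foldr)

lemma free_lift_hom:
  assumes "group K" "t ` I \<subseteq> carrier K"
  shows "free_lift K t \<in> hom (free_grp I) K"
proof (rule homI)
  fix w assume "w \<in> carrier (free_grp I)"
  then show "free_lift K t w \<in> carrier K"
    by (intro free_lift_closed[OF assms]) (auto simp: free_grp_def)
next
  fix x y assume "x \<in> carrier (free_grp I)" "y \<in> carrier (free_grp I)"
  then show "free_lift K t (x \<otimes>\<^bsub>free_grp I\<^esub> y) = free_lift K t x \<otimes>\<^bsub>K\<^esub> free_lift K t y"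
    by (auto simp: free_grp_def free_lift_free_reduce[OF assms] free_lift_append[OF assms])
qed

lemma free_lift_comp:
  assumes "group_hom G K h" "t ` I \<subseteq> carrier G" "set w \<subseteq> I \<times> UNIV"
  shows "free_lift K (\<lambda>i. h (t i)) w = h (free_lift G t w)"
  using assms(3)
proof (induction w)
  interpret group_hom G K h by (rule assms(1))
  case Nil
  then show ?case by (simp add: free_lift_Nil)
next
  interpret group_hom G K h by (rule assms(1))
  case (Cons a w)
  have "t (fst a) \<in> carrier G" using Cons assms(2) by auto
  then have "letter_value K (\<lambda>i. h (t i)) a = h (letter_value G t a)"
    by (simp add: letter_value_def)
  then show ?case
    using Cons free_lift_closed[OF G.is_group assms(2), of w]
      letter_value_closed[OF G.is_group assms(2), of a]
    by (simp add: free_lift_Cons)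
qed

lemma free_lift_image_generate:
  assumes "group G" "T \<subseteq> carrier G"
  shows "free_lift G (\<lambda>x. x) ` carrier (free_grp T) = generate G T"
proof
  interpret G: group G by (rule assms(1))
  show "free_lift G (\<lambda>x. x) ` carrier (free_grp T) \<subseteq> generate G T"
  proof clarify
    fix w assume "w \<in> carrier (free_grp T)"
    then have "set w \<subseteq> T \<times> UNIV" by (simp add: free_grp_def)
    then show "free_lift G (\<lambda>x. x) w \<in> generate G T"
    proof (induction w)
      case (Cons a w)
      then have "fst a \<in> T" by auto
      then have "letter_value G (\<lambda>x. x) a \<in> generate G T"
        by (simp add: letter_value_def generate.incl generate.inv)
      then show ?case using Cons by (simp add: free_lift_Cons generate.eng)
    qed (simp add: free_lift_Nil generate.one)
  qed
next
  interpret F: group "free_grp T" by (rule group_free_grp)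
  interpret group_hom "free_grp T" G "free_lift G (\<lambda>x. x)"
    using free_lift_hom[OF assms(1), of "\<lambda>x. x" T] assms
    by (simp add: group_hom_def group_hom_axioms_def group_free_grp)
  show "generate G T \<subseteq> free_lift G (\<lambda>x. x) ` carrier (free_grp T)"
  proof
    fix g assume "g \<in> generate G T"
    then show "g \<in> free_lift G (\<lambda>x. x) ` carrier (free_grp T)"
    proof (induction rule: generate.induct)
      case one
      have "[] \<in> carrier (free_grp T)" by (simp add: free_grp_def reduced_word_def)
      then show ?case by (force simp: free_lift_Nil)
    next
      case (incl h)
      have "[(h, True)] \<in> carrier (free_grp T)"
        using incl by (simp add: free_grp_def reduced_word_def)
      moreover have "free_lift G (\<lambda>x. x) [(h, True)] = h"
        using incl assms by (auto simp: free_lift_Cons free_lift_Nil letter_value_def)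
      ultimately show ?case by force
    next
      case (inv h)
      have "[(h, False)] \<in> carrier (free_grp T)"
        using inv by (simp add: free_grp_def reduced_word_def)
      moreover have "free_lift G (\<lambda>x. x) [(h, False)] = inv\<^bsub>G\<^esub> h"
        using inv assms by (auto simp: free_lift_Cons free_lift_Nil letter_value_def)
      ultimately show ?case by force
    next
      case (eng h1 h2)
      then obtain w1 w2 where "w1 \<in> carrier (free_grp T)" "w2 \<in> carrier (free_grp T)"
        "h1 = free_lift G (\<lambda>x. x) w1" "h2 = free_lift G (\<lambda>x. x) w2" by blast
      then show ?case by (metis F.m_closed hom_mult image_eqI)
    qed
  qed
qed

lemma (in group_hom) normal_closure_image:
  assumes surj: "h ` carrier G = carrier H" and S: "S \<subseteq> carrier G"
  shows "h ` normal_closure G S = normal_closure H (h ` S)"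
proof -
  let ?X = "{x \<otimes>\<^bsub>G\<^esub> s \<otimes>\<^bsub>G\<^esub> inv\<^bsub>G\<^esub> x | x s. x \<in> carrier G \<and> s \<in> S}"
  let ?Y = "{y \<otimes>\<^bsub>H\<^esub> s \<otimes>\<^bsub>H\<^esub> inv\<^bsub>H\<^esub> y | y s. y \<in> carrier H \<and> s \<in> h ` S}"
  have "h ` ?X = ?Y"
  proof
    show "h ` ?X \<subseteq> ?Y"
    proof (rule image_subsetI)
      fix z assume "z \<in> ?X"
      then obtain x s where "z = x \<otimes>\<^bsub>G\<^esub> s \<otimes>\<^bsub>G\<^esub> inv\<^bsub>G\<^esub> x" "x \<in> carrier G" "s \<in> S"
        by blast
      moreover have "s \<in> carrier G" using \<open>s \<in> S\<close> S by blast
      ultimately have "h z = h x \<otimes>\<^bsub>H\<^esub> h s \<otimes>\<^bsub>H\<^esub> inv\<^bsub>H\<^esub> h x"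
        by simp
      moreover have "h x \<in> carrier H" using \<open>x \<in> carrier G\<close> by simp
      ultimately show "h z \<in> ?Y"
        using \<open>s \<in> S\<close> by blast
    qed
    show "?Y \<subseteq> h ` ?X"
    proof clarify
      fix y s assume "y \<in> carrier H" "s \<in> S"
      then obtain x where x: "x \<in> carrier G" "y = h x" using surj by blast
      moreover have "s \<in> carrier G" using \<open>s \<in> S\<close> S by blast
      ultimately have "y \<otimes>\<^bsub>H\<^esub> h s \<otimes>\<^bsub>H\<^esub> inv\<^bsub>H\<^esub> y = h (x \<otimes>\<^bsub>G\<^esub> s \<otimes>\<^bsub>G\<^esub> inv\<^bsub>G\<^esub> x)"
        by simp
      then show "y \<otimes>\<^bsub>H\<^esub> h s \<otimes>\<^bsub>H\<^esub> inv\<^bsub>H\<^esub> y \<in> h ` ?X"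
        using x \<open>s \<in> S\<close> by blast
    qed
  qed
  moreover have "?X \<subseteq> carrier G" using S by auto
  ultimately have "h ` generate G ?X = generate H ?Y"
    using generate_img[of ?X] by simp
  then show ?thesis
    unfolding normal_closure_def .
qed

lemma (in group_hom) normal_rank_image_le:
  assumes surj: "h ` carrier G = carrier H" and K: "K \<subseteq> carrier G"
  shows "normal_rank H (h ` K) \<le> normal_rank G K"
  unfolding normal_rank_def
proof (rule Inf_mono)
  fix b assume "b \<in> {enat (card S) |S. S \<subseteq> K \<and> finite S \<and> normal_closure G S = K}"
  then obtain S where S: "b = enat (card S)" "S \<subseteq> K" "finite S" "normal_closure G S = K"
    by blast
  then have "normal_closure H (h ` S) = h ` K"
    using normal_closure_image[OF surj] K by auto
  moreover have "enat (card (h ` S)) \<le> b" using S(1) card_image_le[OF S(3)] by simp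
  ultimately show "\<exists>a \<in> {enat (card S) |S. S \<subseteq> h ` K \<and> finite S \<and> normal_closure H S = h ` K}.
      a \<le> b"
    using S(2,3) by blast
qed

lemma (in normal) kernel_comp_r_coset:
  assumes "f \<in> hom F G"
  shows "kernel F (G Mod H) (\<lambda>x. H #> f x) = {x \<in> carrier F. f x \<in> H}"
  using assms coset_join1[OF _ _ subgroup_axioms] coset_join2[OF _ subgroup_axioms]
  by (auto simp: kernel_def hom_def)

theorem proposition2p4:
  fixes G :: "('g, 'b) monoid_scheme" and T :: "'g set" and N :: "'g set"
  assumes "group G"
    and "T \<subseteq> carrier G" and "finite T" and "generate G T = carrier G"
    and "N \<lhd> G"
    and "finite (carrier (G Mod N))"
  shows "normal_rank G N \<le> relation_rank (G Mod N) T (\<lambda>t. N #>\<^bsub>G\<^esub> t)"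
proof -
  interpret N: normal N G by (rule assms(5))
  let ?F = "free_grp T"
  let ?\<phi> = "free_lift G (\<lambda>x. x)"
  interpret \<phi>: group_hom ?F G ?\<phi>
    using free_lift_hom[OF assms(1), of "\<lambda>x. x" T] group_free_grp assms(1,2)
    by (simp add: group_hom_def group_hom_axioms_def)
  have quotient_hom: "group_hom G (G Mod N) (\<lambda>x. N #>\<^bsub>G\<^esub> x)"
    by (simp add: group_hom_def group_hom_axioms_def assms(1) N.factorgroup_is_group
        N.r_coset_hom_Mod)
  have surj: "?\<phi> ` carrier ?F = carrier G"
    using free_lift_image_generate[OF assms(1,2)] assms(4) by simp
  let ?\<psi> = "free_lift (G Mod N) (\<lambda>t. N #>\<^bsub>G\<^esub> t)"
  have "?\<psi> w = N #>\<^bsub>G\<^esub> ?\<phi> w" if "w \<in> carrier ?F" for w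
    using free_lift_comp[OF quotient_hom, of "\<lambda>x. x" T w] that assms(2)
    by (auto simp: free_grp_def)
  then have "kernel ?F (G Mod N) ?\<psi> = kernel ?F (G Mod N) (\<lambda>w. N #>\<^bsub>G\<^esub> ?\<phi> w)"
    by (auto simp: kernel_def)
  also have "\<dots> = {w \<in> carrier ?F. ?\<phi> w \<in> N}"
    by (rule N.kernel_comp_r_coset[OF \<phi>.homh])
  finally have kernel_\<psi>: "kernel ?F (G Mod N) ?\<psi> = {w \<in> carrier ?F. ?\<phi> w \<in> N}" .
  then have "?\<phi> ` kernel ?F (G Mod N) ?\<psi> = N"
    using surj N.subset by auto
  then show ?thesis
    unfolding relation_rank_def
    using \<phi>.normal_rank_image_le[OF surj, of "kernel ?F (G Mod N) ?\<psi>"] kernel_\<psi> by auto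
qed

end
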